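(* Let $k\ge 2$ and $l\geq 3$ be integers and $n=2^k$. Then $a_{(l-1)2^{k-1},\,l2^{k-2}+1}+a_{(l-1)2^{k-1},\,l2^{k-2}-2^{k-1}+1}\equiv 0\pmod{2^l}$.
   Context: Let $D:\mathbb{Z}^n\to\mathbb{Z}^n$, $D(x_1,\dots,x_n)=(x_1+x_2,x_2+x_3,\dots,x_n+x_1)$. For integers $r\ge 0$ and $1\le s\le n$, define the integers $a_{r,s}$ by $D^r(0,0,\dots,0,1)=(a_{r,n},a_{r,n-1},\dots,a_{r,1})$; equivalently, $a_{r,s}$ is the coefficient of $x_s$ in the first coordinate of $D^r(x_1,\dots,x_n)$. The second index is read modulo $n$ (representatives $1,\dots,n$). *)

theory Defs
  imports Main "HOL-Number_Theory.Cong"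
begin

text \<open>Vectors in Z^n are represented as functions nat => int, the coordinates
  being indexed by 1..n (values outside 1..n are irrelevant).\<close>

definition D :: "nat \<Rightarrow> (nat \<Rightarrow> int) \<Rightarrow> (nat \<Rightarrow> int)" where
  "D n x = (\<lambda>i. x i + x (if i = n then 1 else i + 1))"

definition unit_vec :: "nat \<Rightarrow> int \<Rightarrow> (nat \<Rightarrow> int)" where
  "unit_vec n s = (\<lambda>i. if int i mod int n = s mod int n then 1 else 0)"

text \<open>a_{r,s}: the coefficient of x_s in the first coordinate of D^r(x),
  i.e. the first coordinate of D^r(e_s) (D is linear).\<close>
definition a :: "nat \<Rightarrow> nat \<Rightarrow> int \<Rightarrow> int" where
  "a n r s = (D n ^^ r) (unit_vec n s) 1"

end

theory Submission
  imports Defs "HOL-Computational_Algebra.Polynomial"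
begin

text \<open>Reading the first coordinate of \<open>D\<close> as multiplication by 1 + x in
  \<int>[x]/(x^n - 1), a(r,s) is the coefficient of x^(s-1) in (1 + x)^r reduced modulo x^n - 1.
  Shifting s by m = n/2 multiplies by x^m, so the sum in question is a coefficient of
  (1 + x)^((l-1)m) (1 + x^m), and it suffices that this polynomial lies in the ideal
  (2^l, x^n - 1). With y = x^(m/2), the freshman's dream modulo 4 gives
  (1 + x)^m = 2Q + (y^2 - 1), and (y^2 - 1)(1 + y^2) = y^4 - 1 = x^n - 1. Hence modulo x^n - 1
  the polynomial equals (2Q)^(l-1) (1 + y^2), and since Q^2 (1 + y^2) = 2W + (y^4 - 1) for some W,
  the power of 2 rises from l - 1 to l.\<close>

lemma one_plus_power_two_pow_mod_4:
  fixes x :: "'a::comm_ring_1"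
  shows "\<exists>R. (1 + x)^(2^(j+1)) = 1 + x^(2^(j+1)) + 2 * x^(2^j) + 4 * R"
proof (induction j)
  case 0
  show ?case by (rule exI[of _ 0]) (simp add: power2_eq_square algebra_simps)
next
  case (Suc j)
  then obtain R where R: "(1 + x)^(2^(j+1)) = 1 + x^(2^(j+1)) + 2 * x^(2^j) + 4 * R" by blast
  define y where "y = x^(2^j)"
  have y2: "x^(2^(j+1)) = y^2" and y4: "x^(2^(Suc j + 1)) = y^4"
    by (simp_all add: y_def power_mult[symmetric] mult.commute)
  have "(1 + x)^(2^(Suc j + 1)) = ((1 + x)^(2^(j+1)))^2"
    by (simp add: power_mult[symmetric] mult.commute)
  also have "\<dots> = 1 + y^4 + 2 * y^2 + 4 * (y + y^2 + y^3 + 2 * R * (1 + y)^2 + 4 * R^2)"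
    unfolding R y2 y_def[symmetric]
    by (simp add: algebra_simps power2_eq_square power4_eq_xxxx power3_eq_cube)
  also have "\<dots> = 1 + x^(2^(Suc j + 1)) + 2 * x^(2^Suc j)
      + 4 * (y + y^2 + y^3 + 2 * R * (1 + y)^2 + 4 * R^2)"
    using y2 y4 by simp
  finally show ?case by blast
qed

lemma dvd_power_diff_mult:
  fixes a b c d :: "'a::comm_ring_1"
  assumes "d dvd (a - c) * b"
  shows "d dvd (a^i - c^i) * b"
proof (induction i)
  case (Suc i)
  have "(a^Suc i - c^Suc i) * b = a * ((a^i - c^i) * b) + c^i * ((a - c) * b)"
    by (simp add: algebra_simps)
  then show ?case using Suc assms by simp
qed simp

lemma one_plus_power_mult_in_ideal:
  fixes x :: "'a::comm_ring_1"
  assumes "l \<ge> 3"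
  shows "\<exists>G K. (1 + x)^((l - 1) * 2^(j+1)) * (1 + x^(2^(j+1)))
                 = 2^l * G + (x^(2^(j+2)) - 1) * K"
proof -
  obtain R where R: "(1 + x)^(2^(j+1)) = 1 + x^(2^(j+1)) + 2 * x^(2^j) + 4 * R"
    using one_plus_power_two_pow_mod_4 by blast
  define y where "y = x^(2^j)"
  have y2: "x^(2^(j+1)) = y^2" and y4: "x^(2^(j+2)) = y^4"
    by (simp_all add: y_def power_mult[symmetric] mult.commute)
  define A B Q W where "A = (1 + x)^(2^(j+1))" and "B = 1 + y^2" and "Q = 1 + y + 2 * R"
    and "W = 1 + y + y^2 + y^3 + 2 * R * (1 + y) * B + 2 * R^2 * B"
  have "(A - 2 * Q) * B = y^4 - 1"
    unfolding A_def R y2 y_def[symmetric] B_def Q_def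
    by (simp add: algebra_simps power4_eq_xxxx power2_eq_square)
  then have "(y^4 - 1) dvd (A^(l-1) - (2 * Q)^(l-1)) * B"
    using dvd_power_diff_mult[of "y^4 - 1" A "2 * Q" B] by simp
  then obtain K where K: "A^(l-1) * B = (2 * Q)^(l-1) * B + (y^4 - 1) * K"
    by (auto simp: dvd_def algebra_simps)
  have QB: "Q^2 * B = 2 * W + (y^4 - 1)"
    unfolding Q_def B_def W_def
    by (simp add: algebra_simps power4_eq_xxxx power3_eq_cube power2_eq_square)
  obtain m where m: "l = m + 3"
    using assms le_Suc_ex by (metis add.commute)
  have "A^(l-1) * B = 2^(m+2) * Q^m * (Q^2 * B) + (y^4 - 1) * K"
    using K by (simp add: m power_add power_mult_distrib power2_eq_square algebra_simps)
  also have "\<dots> = 2^l * (Q^m * W) + (y^4 - 1) * (2^(m+2) * Q^m + K)"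
    unfolding QB by (simp add: m power_add algebra_simps)
  finally have "A^(l-1) * B = 2^l * (Q^m * W) + (y^4 - 1) * (2^(m+2) * Q^m + K)" .
  moreover have "(1 + x)^((l - 1) * 2^(j+1)) = A^(l-1)"
    by (simp add: A_def power_mult[symmetric] mult.commute)
  ultimately show ?thesis
    unfolding y2 y4 B_def by metis
qed

definition cyclic_coeff :: "nat \<Rightarrow> int \<Rightarrow> 'a::comm_ring_1 poly \<Rightarrow> 'a" where
  "cyclic_coeff n t p = (\<Sum>i\<le>degree p. if [int i = t] (mod int n) then coeff p i else 0)"

lemma cyclic_coeff_degree_le:
  assumes "degree p \<le> N"
  shows "cyclic_coeff n t p = (\<Sum>i\<le>N. if [int i = t] (mod int n) then coeff p i else 0)"
  unfolding cyclic_coeff_def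
  by (rule sum.mono_neutral_left) (use assms in \<open>auto simp: coeff_eq_0\<close>)

lemma cyclic_coeff_add: "cyclic_coeff n t (p + q) = cyclic_coeff n t p + cyclic_coeff n t q"
proof -
  define N where "N = max (degree p) (degree q)"
  have "degree (p + q) \<le> N" "degree p \<le> N" "degree q \<le> N"
    unfolding N_def by (auto intro: degree_add_le)
  then show ?thesis
    by (simp add: cyclic_coeff_degree_le sum.distrib[symmetric] if_distrib) (auto intro!: sum.cong)
qed

lemma cyclic_coeff_smult: "cyclic_coeff n t (smult c p) = c * cyclic_coeff n t p"
  unfolding cyclic_coeff_degree_le[OF degree_smult_le]
    cyclic_coeff_degree_le[OF order_refl, where p = p]
  by (auto simp: sum_distrib_left intro!: sum.cong)

lemma cyclic_coeff_diff: "cyclic_coeff n t (p - q) = cyclic_coeff n t p - cyclic_coeff n t q"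
  using cyclic_coeff_add[of n t p "-q"] cyclic_coeff_smult[of n t "-1" q] by simp

lemma cyclic_coeff_monom_mult:
  "cyclic_coeff n t (monom 1 m * p) = cyclic_coeff n (t - int m) p"
proof -
  let ?c = "\<lambda>i. if [int i = t] (mod int n) then coeff (monom 1 m * p) i else 0"
  have "degree (monom 1 m * p) \<le> m + degree p"
    by (metis add_le_mono1 degree_monom_le degree_mult_le order_trans)
  then have "cyclic_coeff n t (monom 1 m * p) = (\<Sum>i\<le>m + degree p. ?c i)"
    by (rule cyclic_coeff_degree_le)
  also have "\<dots> = (\<Sum>i\<in>{0 + m..degree p + m}. ?c i)"
    by (rule sum.mono_neutral_right) (auto simp: coeff_monom_mult)
  also have "\<dots> = (\<Sum>i\<in>{0..degree p}. ?c (i + m))"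
    by (rule sum.shift_bounds_cl_nat_ivl)
  also have "\<dots> = cyclic_coeff n (t - int m) p"
    unfolding cyclic_coeff_def atLeast0AtMost
    by (intro sum.cong)
      (auto simp: coeff_monom_mult cong_add_rcancel[of "int _" "int m" "t - int m", simplified])
  finally show ?thesis .
qed

lemma cyclic_coeff_cyclotomic_mult: "cyclic_coeff n t ((monom 1 n - 1) * p) = 0"
proof -
  have "cyclic_coeff n t (monom 1 n * p) = cyclic_coeff n t p"
    unfolding cyclic_coeff_monom_mult by (simp add: cyclic_coeff_def cong_def)
  then show ?thesis
    by (simp add: left_diff_distrib cyclic_coeff_diff)
qed

lemma sum_binomial_Suc:
  fixes f :: "nat \<Rightarrow> 'a::comm_semiring_1"
  shows "(\<Sum>j\<le>Suc r. of_nat (Suc r choose j) * f j)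
       = (\<Sum>j\<le>r. of_nat (r choose j) * (f j + f (Suc j)))"
proof -
  have "(\<Sum>j\<le>r. of_nat (r choose j) * f j) = (\<Sum>j\<le>Suc r. of_nat (r choose j) * f j)"
    by (simp add: binomial_eq_0)
  also have "\<dots> = f 0 + (\<Sum>j\<le>r. of_nat (r choose Suc j) * f (Suc j))"
    by (subst sum.atMost_Suc_shift) simp
  finally have "(\<Sum>j\<le>r. of_nat (r choose j) * f j)
      = f 0 + (\<Sum>j\<le>r. of_nat (r choose Suc j) * f (Suc j))" .
  moreover have "(\<Sum>j\<le>Suc r. of_nat (Suc r choose j) * f j)
      = f 0 + (\<Sum>j\<le>r. (of_nat (r choose j) + of_nat (r choose Suc j)) * f (Suc j))"
    by (subst sum.atMost_Suc_shift) simp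
  ultimately show ?thesis
    by (simp add: distrib_left distrib_right sum.distrib algebra_simps)
qed

lemma D_iterate:
  assumes "0 < n"
  shows "(D n ^^ r) x (i mod n + 1) = (\<Sum>j\<le>r. of_nat (r choose j) * x ((i + j) mod n + 1))"
proof (induction r arbitrary: x)
  case (Suc r)
  have D_mod: "D n x (q mod n + 1) = x (q mod n + 1) + x (Suc q mod n + 1)" for x q
    using assms by (auto simp: D_def mod_Suc)
  have "(D n ^^ Suc r) x (i mod n + 1) = (D n ^^ r) (D n x) (i mod n + 1)"
    by (simp add: funpow_Suc_right del: funpow.simps)
  also have "\<dots> = (\<Sum>j\<le>r. of_nat (r choose j)
                        * (x ((i + j) mod n + 1) + x ((i + Suc j) mod n + 1)))"
    by (simp only: Suc.IH D_mod add_Suc_right)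
  also have "\<dots> = (\<Sum>j\<le>Suc r. of_nat (Suc r choose j) * x ((i + j) mod n + 1))"
    by (rule sum_binomial_Suc[symmetric])
  finally show ?case .
qed simp

lemma a_eq_cyclic_coeff:
  assumes "0 < n"
  shows "a n r s = cyclic_coeff n (s - 1) ([:1, 1:]^r)"
proof -
  have unit_vec: "unit_vec n s (Suc (j mod n)) = (if [int j = s - 1] (mod int n) then 1 else 0)"
    for j
  proof -
    have "int (Suc (j mod n)) mod int n = (int j + 1) mod int n"
      by (simp add: of_nat_mod) (metis add.commute mod_add_right_eq)
    moreover have "(int j + 1) mod int n = s mod int n \<longleftrightarrow> [int j = s - 1] (mod int n)"
      by (simp add: cong_iff_dvd_diff mod_eq_dvd_iff algebra_simps)
    ultimately show ?thesis
      by (simp add: unit_vec_def)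
  qed
  have "a n r s = (D n ^^ r) (unit_vec n s) (0 mod n + 1)"
    by (simp add: a_def)
  also have "\<dots> = (\<Sum>j\<le>r. of_nat (r choose j) * unit_vec n s (j mod n + 1))"
    using D_iterate[OF assms, of r "unit_vec n s" 0] by simp
  also have "\<dots> = cyclic_coeff n (s - 1) ([:1, 1:]^r)"
    by (auto simp: cyclic_coeff_def unit_vec degree_linear_power coeff_linear_poly_power
        intro!: sum.cong)
  finally show ?thesis .
qed

theorem lemma4p7:
  fixes k l :: nat
  assumes "k \<ge> 2" and "l \<ge> 3"
  shows "[a (2^k) ((l - 1) * 2^(k-1)) (int l * 2^(k-2) + 1)
          + a (2^k) ((l - 1) * 2^(k-1)) (int l * 2^(k-2) - 2^(k-1) + 1) = 0] (mod 2^l)"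
proof -
  obtain j where k: "k = j + 2"
    using assms(1) by (metis add.commute le_Suc_ex)
  define t :: int where "t = int l * 2^(k-2)"
  define P :: "int poly" where "P = [:1, 1:]^((l - 1) * 2^(k-1))"
  have two_pow: "(2::int poly)^l * G = smult (2^l) G" for G
    by (metis of_int_numeral of_int_poly of_int_power mult_smult_left mult_1 smult_one)
  obtain G K where GK: "P * (1 + monom 1 (2^(j+1))) = smult (2^l) G + (monom 1 (2^k) - 1) * K"
    using one_plus_power_mult_in_ideal[OF assms(2), of "[:0, 1:] :: int poly" j]
    by (auto simp: P_def k monom_altdef two_pow one_pCons)
  have "a (2^k) ((l - 1) * 2^(k-1)) (t + 1) + a (2^k) ((l - 1) * 2^(k-1)) (t - 2^(k-1) + 1)
      = cyclic_coeff (2^k) t P + cyclic_coeff (2^k) (t - int (2^(j+1))) P"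
    by (simp add: a_eq_cyclic_coeff P_def k)
  also have "\<dots> = cyclic_coeff (2^k) t (P * (1 + monom 1 (2^(j+1))))"
    by (simp add: distrib_left cyclic_coeff_add mult.commute[of P] cyclic_coeff_monom_mult)
  also have "\<dots> = 2^l * cyclic_coeff (2^k) t G"
    unfolding GK by (simp add: cyclic_coeff_add cyclic_coeff_smult cyclic_coeff_cyclotomic_mult)
  finally show ?thesis
    by (simp add: t_def cong_0_iff)
qed

end
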